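(* Let $A\in M_n(R)$ be non-singular, with left definite form $\bar A$ and right definite form $\tilde A$, i.e. $A=P\bar A=\tilde A Q$ for invertible matrices $P,Q$ and definite matrices $\bar A,\tilde A$. Then (a) $\bar A^{\nabla\nabla}\cong_\nu \bar A^{\nabla}\cong_\nu A^\nabla A$ and $\tilde A^{\nabla\nabla}\cong_\nu \tilde A^{\nabla}\cong_\nu AA^\nabla$; (b) $A^{\nabla\nabla}\cong_\nu PA^\nabla P$.
   Context: Supertropical semiring $R=T\cup G\cup\{-\infty\}$: $T=\mathcal G$ an ordered abelian group (tangible), $G=\{a^\nu\}$ a copy (ghost); $a+b$ is the element of larger $\nu$-value if the $\nu$-values differ and $a^\nu$ if equal; multiplication adds $\nu$-values, is ghost if a factor is ghost, $-\infty$ absorbing; $0_R=-\infty$, $1_R=0$. For matrices, $A\cong_\nu B$ means $a_{i,j}^\nu=b_{i,j}^\nu$ for all $i,j$. $\det(A)=\sum_{\sigma\in S_n}\prod_i a_{i,\sigma(i)}$; $A$ non-singular means $\det(A)\in T$. $\operatorname{adj}(A)_{i,j}=\det(A_{j,i})$ (minor deleting row $j$, column $i$), and for non-singular $A$, $A^\nabla=\det(A)^{-1}\operatorname{adj}(A)$; $A^{\nabla\nabla}=(A^\nabla)^\nabla$. A matrix is invertible iff it is a generalized permutation matrix (permutation matrix times diagonal matrix with tangible diagonal). A matrix is definite if its diagonal entries are $1_R$ and its determinant is $1_R$. Every non-singular $A$ can be written $A=P\bar A$ ($P$ invertible, $\bar A$ definite; left definite form) and $A=\tilde A Q$ ($Q$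 invertible, $\tilde A$ definite; right definite form), obtained by moving the unique dominant permutation track to the diagonal and normalizing it to $1_R$. *)

theory Defs
  imports "HOL-Combinatorics.Permutations"
begin

text \<open>Tangible elements Tng a, ghost elements Gst a (= a^nu), and the zero element NInf (= -infinity).\<close>
datatype 'g st = Tng 'g | Gst 'g | NInf

fun st_val :: "'g st \<Rightarrow> 'g" where
  "st_val (Tng a) = a" | "st_val (Gst a) = a" | "st_val NInf = undefined"

fun nu :: "'g st \<Rightarrow> 'g st" where
  "nu (Tng a) = Gst a" | "nu (Gst a) = Gst a" | "nu NInf = NInf"

fun tangible :: "'g st \<Rightarrow> bool" where
  "tangible (Tng a) = True" | "tangible _ = False"

instantiation st :: (linordered_ab_group_add) comm_monoid_add
begin
definition zero_st :: "'a st" where "zero_st = NInf"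
fun plus_st :: "'a st \<Rightarrow> 'a st \<Rightarrow> 'a st" where
  "plus_st NInf y = y"
| "plus_st x NInf = x"
| "plus_st x y = (if st_val x < st_val y then y else if st_val y < st_val x then x
                  else Gst (st_val x))"
instance
proof
  fix a b c :: "'a st"
  show "a + b + c = a + (b + c)"
    by (cases a; cases b; cases c) auto
  show "a + b = b + a"
    by (cases a; cases b) auto
  show "0 + a = a" by (simp add: zero_st_def)
qed
end

instantiation st :: (linordered_ab_group_add) comm_monoid_mult
begin
definition one_st :: "'a st" where "one_st = Tng 0"
fun times_st :: "'a st \<Rightarrow> 'a st \<Rightarrow> 'a st" where
  "times_st NInf y = NInf"
| "times_st x NInf = NInf"
| "times_st (Tng a) (Tng b) = Tng (a + b)"
| "times_st x y = Gst (st_val x + st_val y)"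
instance
proof
  fix a b c :: "'a st"
  show "a * b * c = a * (b * c)"
    by (cases a; cases b; cases c) (auto simp: add.assoc)
  show "a * b = b * a"
    by (cases a; cases b) (auto simp: add.commute)
  show "1 * a = a" by (cases a) (simp_all add: one_st_def)
qed
end

text \<open>Inverse of a tangible element (used only for tangible determinants; on ghosts
  we take the nu-inverse, on NInf it is NInf).\<close>
fun st_inv :: "'g::linordered_ab_group_add st \<Rightarrow> 'g st" where
  "st_inv (Tng a) = Tng (- a)" | "st_inv (Gst a) = Gst (- a)" | "st_inv NInf = NInf"

section \<open>n x n matrices, represented as functions on indices below n\<close>

type_synonym 'g smat = "nat \<Rightarrow> nat \<Rightarrow> 'g st"

definition mat_eq :: "nat \<Rightarrow> 'g smat \<Rightarrow> 'g smat \<Rightarrow> bool" where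
  "mat_eq n A B \<longleftrightarrow> (\<forall>i<n. \<forall>j<n. A i j = B i j)"

definition nu_equiv :: "nat \<Rightarrow> 'g smat \<Rightarrow> 'g smat \<Rightarrow> bool" where
  "nu_equiv n A B \<longleftrightarrow> (\<forall>i<n. \<forall>j<n. nu (A i j) = nu (B i j))"

definition mat_mult :: "nat \<Rightarrow> 'g::linordered_ab_group_add smat \<Rightarrow> 'g smat \<Rightarrow> 'g smat" where
  "mat_mult n A B = (\<lambda>i j. \<Sum>k<n. A i k * B k j)"

definition mat_id :: "'g::linordered_ab_group_add smat" where
  "mat_id = (\<lambda>i j. if i = j then 1 else 0)"

definition sdet :: "nat \<Rightarrow> 'g::linordered_ab_group_add smat \<Rightarrow> 'g st" where
  "sdet n A = (\<Sum>\<sigma>\<in>{\<sigma>. \<sigma> permutes {..<n}}. \<Prod>i<n. A i (\<sigma> i))"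

definition nonsingular :: "nat \<Rightarrow> 'g::linordered_ab_group_add smat \<Rightarrow> bool" where
  "nonsingular n A \<longleftrightarrow> tangible (sdet n A)"

definition minor :: "'g smat \<Rightarrow> nat \<Rightarrow> nat \<Rightarrow> 'g smat" where
  "minor A r c = (\<lambda>i j. A (if i < r then i else Suc i) (if j < c then j else Suc j))"

definition sadj :: "nat \<Rightarrow> 'g::linordered_ab_group_add smat \<Rightarrow> 'g smat" where
  "sadj n A = (\<lambda>i j. sdet (n - 1) (minor A j i))"

definition nabla :: "nat \<Rightarrow> 'g::linordered_ab_group_add smat \<Rightarrow> 'g smat" where
  "nabla n A = (\<lambda>i j. st_inv (sdet n A) * sadj n A i j)"

definition invertible_smat :: "nat \<Rightarrow> 'g::linordered_ab_group_add smat \<Rightarrow> bool" where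
  "invertible_smat n P \<longleftrightarrow>
     (\<exists>B. mat_eq n (mat_mult n P B) mat_id \<and> mat_eq n (mat_mult n B P) mat_id)"

definition definite :: "nat \<Rightarrow> 'g::linordered_ab_group_add smat \<Rightarrow> bool" where
  "definite n A \<longleftrightarrow> (\<forall>i<n. A i i = 1) \<and> sdet n A = 1"

end

theory Submission
  imports Defs
begin

(* A definite matrix D has every permutation track nu-below its identity track 1, and the
   entries of E = adj D are sums of partial tracks. An exchange argument on permutations gives
   E i k * D k j <=nu E i j; from this E is nu-transitive with nu-unit diagonal, so all tracks of
   E are <=nu 1. Hence det E ~nu 1 and adj E ~nu E, i.e. the nabla of nabla D, nabla D and
   (nabla D) D all agree up to nu.
   An invertible P is a generalized permutation matrix, so A = P D is D with its rows permuted
   and scaled by tangible factors; nabla turns this into the corresponding column operation with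
   the inverse factors, which transfers the identities to (nabla A) A and to
   nabla (nabla A) ~nu P (nabla A) P. The right definite form is the left one of the transpose. *)

section \<open>Supertropical arithmetic and the \<nu>-order\<close>

instance st :: (linordered_ab_group_add) comm_semiring_1
proof
  fix a b c :: "'a st"
  show "(a + b) * c = a * c + b * c"
    by (cases a; cases b; cases c) (auto simp: not_less)
  show "0 * a = 0" by (simp add: zero_st_def)
  show "a * 0 = 0" by (cases a) (simp_all add: zero_st_def)
  show "(0::'a st) \<noteq> 1" by (simp add: zero_st_def one_st_def)
qed

definition nu_le :: "'g::linordered_ab_group_add st \<Rightarrow> 'g st \<Rightarrow> bool" (infix \<open>\<le>\<^sub>\<nu>\<close> 50) where
  "x \<le>\<^sub>\<nu> y \<longleftrightarrow> x = NInf \<or> (y \<noteq> NInf \<and> st_val x \<le> st_val y)"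

lemma nu_le_refl [simp]: "x \<le>\<^sub>\<nu> x"
  by (cases x) (auto simp: nu_le_def)

lemma nu_le_trans [trans]: "x \<le>\<^sub>\<nu> y \<Longrightarrow> y \<le>\<^sub>\<nu> z \<Longrightarrow> x \<le>\<^sub>\<nu> z"
  by (cases x; cases y; cases z) (auto simp: nu_le_def)

lemma nu_le_antisym: "x \<le>\<^sub>\<nu> y \<Longrightarrow> y \<le>\<^sub>\<nu> x \<Longrightarrow> nu x = nu y"
  by (cases x; cases y) (auto simp: nu_le_def)

lemma zero_nu_le [simp]: "0 \<le>\<^sub>\<nu> x"
  by (simp add: nu_le_def zero_st_def)

lemma nu_le_add_left: "x \<le>\<^sub>\<nu> x + y"
  by (cases x; cases y) (auto simp: nu_le_def)

lemma add_nu_le: "x \<le>\<^sub>\<nu> z \<Longrightarrow> y \<le>\<^sub>\<nu> z \<Longrightarrow> x + y \<le>\<^sub>\<nu> z"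
  by (cases x; cases y; cases z) (auto simp: nu_le_def)

lemma mult_nu_le_mono: "a \<le>\<^sub>\<nu> b \<Longrightarrow> c \<le>\<^sub>\<nu> d \<Longrightarrow> a * c \<le>\<^sub>\<nu> b * d"
  by (cases a; cases b; cases c; cases d) (auto simp: nu_le_def add_mono)

lemma nu_le_mult_right: "1 \<le>\<^sub>\<nu> a \<Longrightarrow> b \<le>\<^sub>\<nu> b * a"
  using mult_nu_le_mono[of b b 1 a] by simp

lemma sum_nu_le: "finite A \<Longrightarrow> (\<And>x. x \<in> A \<Longrightarrow> f x \<le>\<^sub>\<nu> y) \<Longrightarrow> sum f A \<le>\<^sub>\<nu> y"
  by (induction A rule: finite_induct) (auto simp: add_nu_le)

lemma member_nu_le_sum: "finite A \<Longrightarrow> a \<in> A \<Longrightarrow> f a \<le>\<^sub>\<nu> sum f A"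
  by (metis nu_le_add_left sum.remove)

lemma prod_nu_le_mono: "(\<And>x. x \<in> A \<Longrightarrow> f x \<le>\<^sub>\<nu> g x) \<Longrightarrow> prod f A \<le>\<^sub>\<nu> prod g A"
  by (induction A rule: infinite_finite_induct) (auto simp: mult_nu_le_mono)

lemma one_nu_le_prod: "(\<And>x. x \<in> A \<Longrightarrow> 1 \<le>\<^sub>\<nu> f x) \<Longrightarrow> 1 \<le>\<^sub>\<nu> prod f A"
  using prod_nu_le_mono[of A "\<lambda>_. 1" f] by simp

lemma nu_mult: "nu (x * y) = nu x * nu y"
  by (cases x; cases y) auto

lemma nu_st_inv_cong: "nu x = nu y \<Longrightarrow> nu (st_inv x) = nu (st_inv y)"
  by (cases x; cases y) auto

lemma st_inv_mult: "st_inv (x * y) = st_inv x * st_inv y"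
  by (cases x; cases y) auto

lemma st_inv_mult_tangible: "tangible x \<Longrightarrow> st_inv x * x = 1"
  by (cases x) (auto simp: one_st_def)

lemma st_inv_st_inv [simp]: "st_inv (st_inv x) = x"
  by (cases x) auto

lemma st_inv_one [simp]: "st_inv 1 = 1"
  by (simp add: one_st_def)

lemma tangible_mult_iff: "tangible (x * y) \<longleftrightarrow> tangible x \<and> tangible y"
  by (cases x; cases y) auto

lemma tangible_st_inv_iff [simp]: "tangible (st_inv x) \<longleftrightarrow> tangible x"
  by (cases x) auto

lemma tangible_prod: "(\<And>x. x \<in> A \<Longrightarrow> tangible (f x)) \<Longrightarrow> tangible (prod f A)"
  by (induction A rule: infinite_finite_induct) (auto simp: tangible_mult_iff one_st_def)

lemma sum_st_eq_zero_iff: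
  fixes f :: "'a \<Rightarrow> 'g::linordered_ab_group_add st"
  shows "finite A \<Longrightarrow> sum f A = 0 \<longleftrightarrow> (\<forall>x\<in>A. f x = 0)"
proof (induction A rule: finite_induct)
  case (insert x F)
  have "a + b = 0 \<longleftrightarrow> a = 0 \<and> b = 0" for a b :: "'g st"
    by (cases a; cases b) (auto simp: zero_st_def)
  then show ?case using insert by simp
qed simp

lemma mult_st_eq_zero_iff: "(a::'g::linordered_ab_group_add st) * b = 0 \<longleftrightarrow> a = 0 \<or> b = 0"
  by (cases a; cases b) (auto simp: zero_st_def)

section \<open>The adjoint as a sum of partial tracks\<close>

definition perm_adj :: "nat \<Rightarrow> 'g::linordered_ab_group_add smat \<Rightarrow> 'g smat" where
  "perm_adj n M i j = (\<Sum>\<sigma> | \<sigma> permutes {..<n} \<and> \<sigma> j = i. \<Prod>l\<in>{..<n}-{j}. M l (\<sigma> l))"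

definition skip :: "nat \<Rightarrow> nat \<Rightarrow> nat" where
  "skip r a = (if a < r then a else Suc a)"

definition unskip :: "nat \<Rightarrow> nat \<Rightarrow> nat" where
  "unskip r l = (if l < r then l else l - 1)"

lemma unskip_skip [simp]: "unskip r (skip r a) = a"
  by (simp add: skip_def unskip_def)

lemma skip_unskip [simp]: "l \<noteq> r \<Longrightarrow> skip r (unskip r l) = l"
  by (auto simp: skip_def unskip_def)

lemma skip_neq [simp]: "skip r a \<noteq> r"
  by (simp add: skip_def)

lemma skip_inject [simp]: "skip r a = skip r b \<longleftrightarrow> a = b"
  by (auto simp: skip_def)

lemma skip_less: "a < n - 1 \<Longrightarrow> skip r a < n"
  by (auto simp: skip_def)

lemma unskip_less: "l < n \<Longrightarrow> r < n \<Longrightarrow> l \<noteq> r \<Longrightarrow> unskip r l < n - 1"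
  by (auto simp: unskip_def)

lemma minor_skip: "minor A r c a b = A (skip r a) (skip c b)"
  by (simp add: minor_def skip_def)

(* A permutation of the minor deleting row j and column i is a permutation of {..<n} sending j to i. *)
definition lift_perm :: "nat \<Rightarrow> nat \<Rightarrow> nat \<Rightarrow> (nat \<Rightarrow> nat) \<Rightarrow> nat \<Rightarrow> nat" where
  "lift_perm n i j \<tau> l = (if l = j then i else if l < n then skip i (\<tau> (unskip j l)) else l)"

definition drop_perm :: "nat \<Rightarrow> nat \<Rightarrow> nat \<Rightarrow> (nat \<Rightarrow> nat) \<Rightarrow> nat \<Rightarrow> nat" where
  "drop_perm n i j \<sigma> a = (if a < n - 1 then unskip i (\<sigma> (skip j a)) else a)"

lemma lift_perm_permutes:
  assumes \<tau>: "\<tau> permutes {..<n-1}" and i: "i < n" and j: "j < n"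
  shows "lift_perm n i j \<tau> permutes {..<n}"
proof (rule inj_imp_permutes)
  have \<tau>_less: "\<tau> a < n - 1" if "a < n - 1" for a
    using permutes_in_image[OF \<tau>] that by simp
  show "inj_on (lift_perm n i j \<tau>) {..<n}"
  proof (rule inj_onI)
    fix x y assume x: "x \<in> {..<n}" and y: "y \<in> {..<n}"
      and eq: "lift_perm n i j \<tau> x = lift_perm n i j \<tau> y"
    show "x = y"
    proof (cases "x = j \<or> y = j")
      case False
      then have "\<tau> (unskip j x) = \<tau> (unskip j y)"
        using eq x y by (simp add: lift_perm_def)
      then have "unskip j x = unskip j y"
        using permutes_inj[OF \<tau>] by (simp add: inj_eq)
      then show ?thesis using False by (metis skip_unskip)
    qed (use eq x y skip_neq in \<open>auto simp: lift_perm_def split: if_splits; metis\<close>)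
  qed
  show "lift_perm n i j \<tau> l \<in> {..<n}" if "l \<in> {..<n}" for l
    using that i j \<tau>_less[OF unskip_less[of l n j]] skip_less by (auto simp: lift_perm_def)
  show "lift_perm n i j \<tau> l = l" if "l \<notin> {..<n}" for l
    using that j by (auto simp: lift_perm_def)
qed simp

lemma lift_perm_at [simp]: "lift_perm n i j \<tau> j = i"
  by (simp add: lift_perm_def)

lemma drop_perm_permutes:
  assumes \<sigma>: "\<sigma> permutes {..<n}" "\<sigma> j = i" and i: "i < n"
  shows "drop_perm n i j \<sigma> permutes {..<n-1}"
proof (rule inj_imp_permutes)
  have \<sigma>_skip_neq: "\<sigma> (skip j a) \<noteq> i" for a
    using permutes_inj[OF \<sigma>(1)] \<sigma>(2) by (metis injD skip_neq)
  show "inj_on (drop_perm n i j \<sigma>) {..<n-1}"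
  proof (rule inj_onI)
    fix x y assume "x \<in> {..<n-1}" "y \<in> {..<n-1}" "drop_perm n i j \<sigma> x = drop_perm n i j \<sigma> y"
    then have "unskip i (\<sigma> (skip j x)) = unskip i (\<sigma> (skip j y))"
      by (simp add: drop_perm_def)
    then have "\<sigma> (skip j x) = \<sigma> (skip j y)"
      using \<sigma>_skip_neq by (metis skip_unskip)
    then show "x = y"
      using permutes_inj[OF \<sigma>(1)] by (simp add: inj_eq)
  qed
  show "drop_perm n i j \<sigma> a \<in> {..<n-1}" if "a \<in> {..<n-1}" for a
  proof -
    have "\<sigma> (skip j a) < n"
      using permutes_in_image[OF \<sigma>(1)] skip_less that by simp
    then show ?thesis
      using that i \<sigma>_skip_neq unskip_less by (simp add: drop_perm_def)
  qed
qed (simp_all add: drop_perm_def)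

lemma sadj_eq_perm_adj:
  assumes i: "i < n" and j: "j < n"
  shows "sadj n M i j = perm_adj n M i j"
proof -
  have "sadj n M i j = (\<Sum>\<tau> | \<tau> permutes {..<n-1}. \<Prod>a<n-1. M (skip j a) (skip i (\<tau> a)))"
    by (simp add: sadj_def sdet_def minor_skip)
  also have "\<dots> = perm_adj n M i j"
    unfolding perm_adj_def
  proof (rule sum.reindex_bij_witness[where i = "drop_perm n i j" and j = "lift_perm n i j"])
    fix \<tau> assume "\<tau> \<in> {\<tau>. \<tau> permutes {..<n-1}}"
    then have \<tau>: "\<tau> permutes {..<n-1}" by simp
    show "lift_perm n i j \<tau> \<in> {\<sigma>. \<sigma> permutes {..<n} \<and> \<sigma> j = i}"
      using lift_perm_permutes[OF \<tau> i j] by simp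
    show "drop_perm n i j (lift_perm n i j \<tau>) = \<tau>"
    proof
      fix a show "drop_perm n i j (lift_perm n i j \<tau>) a = \<tau> a"
        using skip_less[of a n j] permutes_not_in[OF \<tau>, of a]
        by (auto simp: drop_perm_def lift_perm_def)
    qed
    show "(\<Prod>l\<in>{..<n}-{j}. M l (lift_perm n i j \<tau> l)) = (\<Prod>a<n-1. M (skip j a) (skip i (\<tau> a)))"
      by (rule sym, rule prod.reindex_bij_witness[where i = "unskip j" and j = "skip j"])
        (use j skip_less unskip_less in \<open>auto simp: lift_perm_def\<close>)
  next
    fix \<sigma> assume "\<sigma> \<in> {\<sigma>. \<sigma> permutes {..<n} \<and> \<sigma> j = i}"
    then have \<sigma>: "\<sigma> permutes {..<n}" "\<sigma> j = i" by auto
    show "drop_perm n i j \<sigma> \<in> {\<tau>. \<tau> permutes {..<n-1}}"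
      using drop_perm_permutes[OF \<sigma> i] by simp
    show "lift_perm n i j (drop_perm n i j \<sigma>) = \<sigma>"
    proof
      fix l show "lift_perm n i j (drop_perm n i j \<sigma>) l = \<sigma> l"
      proof (cases "l = j \<or> n \<le> l")
        case False
        then have "\<sigma> l \<noteq> i"
          using permutes_inj[OF \<sigma>(1)] \<sigma>(2) by (metis injD)
        then show ?thesis
          using False unskip_less[of l n j] j by (simp add: drop_perm_def lift_perm_def)
      qed (use \<sigma> permutes_not_in[OF \<sigma>(1), of l] in \<open>auto simp: lift_perm_def\<close>)
    qed
  qed
  finally show ?thesis .
qed

section \<open>Exchanging partial tracks\<close>

lemma invariant_cycle_through:
  assumes S: "finite S" "g ` S \<subseteq> S" "j \<in> S"
    and collision: "\<And>x y. x \<in> S \<Longrightarrow> y \<in> S \<Longrightarrow> g x = g y \<Longrightarrow> x \<noteq> y \<Longrightarrow> g x = j"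
  obtains C where "j \<in> C" "C \<subseteq> S" "g ` C = C"
proof
  define C where "C = range (\<lambda>m. (g ^^ m) j)"
  show "j \<in> C"
    unfolding C_def by (rule range_eqI[of _ _ 0]) simp
  have "(g ^^ m) j \<in> S" for m
    by (induction m) (use S in auto)
  then show CS: "C \<subseteq> S"
    by (auto simp: C_def)
  have gC: "g ` C \<subseteq> C"
    unfolding C_def by (auto intro: range_eqI[of _ _ "Suc _"])
  have "j \<in> g ` C"
  proof (rule ccontr)
    assume j: "j \<notin> g ` C"
    have "finite C"
      using S(1) CS by (rule finite_subset[rotated])
    moreover have "g ` C \<subset> C"
      using gC j \<open>j \<in> C\<close> by blast
    ultimately have "card (g ` C) < card C"
      by (rule psubset_card_mono)
    then have "\<not> inj_on g C"
      by (auto dest: card_image)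
    then obtain x y where "x \<in> C" "y \<in> C" "x \<noteq> y" "g x = g y"
      by (auto simp: inj_on_def)
    then show False
      using collision CS j by blast
  qed
  have "C \<subseteq> g ` C"
  proof
    fix x assume "x \<in> C"
    then obtain m where "x = (g ^^ m) j"
      by (auto simp: C_def)
    then show "x \<in> g ` C"
      using \<open>j \<in> g ` C\<close> by (cases m) (auto simp: C_def)
  qed
  with gC show "g ` C = C"
    by blast
qed

lemma redirected_perm_facts:
  assumes \<sigma>: "\<sigma> permutes S" "\<sigma> k = i" and ij: "i \<noteq> j" and S: "j \<in> S" "k \<in> S"
  defines "g \<equiv> \<sigma>(k := j)"
  shows "g ` S \<subseteq> S" and "\<And>x. x \<notin> S \<Longrightarrow> g x = x"
    and "\<And>x y. g x = g y \<Longrightarrow> x \<noteq> y \<Longrightarrow> g x = j"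
    and "\<And>x y. g x = g y \<Longrightarrow> x \<noteq> k \<Longrightarrow> y \<noteq> k \<Longrightarrow> x = y"
    and "\<And>x. g x \<noteq> i"
proof -
  show "g ` S \<subseteq> S"
    using permutes_in_image[OF \<sigma>(1)] S by (auto simp: g_def)
  show "g x = x" if "x \<notin> S" for x
    using permutes_not_in[OF \<sigma>(1)] S that by (auto simp: g_def)
  show inj_off: "x = y" if "g x = g y" "x \<noteq> k" "y \<noteq> k" for x y
    using that permutes_inj[OF \<sigma>(1)] by (simp add: g_def inj_eq)
  show "g x = j" if "g x = g y" "x \<noteq> y" for x y
  proof (cases "x = k \<or> y = k")
    case False
    then show ?thesis
      using inj_off[OF that(1)] that(2) by blast
  qed (use that(1) in \<open>auto simp: g_def\<close>)
  show "g x \<noteq> i" for x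
    using permutes_inj[OF \<sigma>(1)] \<sigma>(2) ij by (auto simp: g_def dest: injD)
qed

lemma outside_invariant_set:
  assumes collision: "\<And>x y. g x = g y \<Longrightarrow> x \<noteq> y \<Longrightarrow> g x = j"
    and inj_off: "\<And>x y. g x = g y \<Longrightarrow> x \<noteq> k \<Longrightarrow> y \<noteq> k \<Longrightarrow> x = y"
    and C: "j \<in> C" "g ` C = C"
  shows "\<And>x. x \<notin> C \<Longrightarrow> g x \<notin> C - {j}"
    and "\<And>x y. x \<notin> C \<Longrightarrow> y \<notin> C \<Longrightarrow> g x = g y \<Longrightarrow> x = y"
proof -
  show "g x \<notin> C - {j}" if "x \<notin> C" for x
  proof
    assume "g x \<in> C - {j}"
    then obtain c where "c \<in> C" "g c = g x" "g x \<noteq> j"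
      using C(2) by (metis DiffE imageE singletonI)
    then show False
      using collision \<open>x \<notin> C\<close> by metis
  qed
  show "x = y" if "x \<notin> C" "y \<notin> C" "g x = g y" for x y
  proof (rule ccontr)
    assume "x \<noteq> y"
    then have "g x = j"
      using collision that(3) by blast
    moreover obtain c where "c \<in> C" "g c = j"
      using C by (metis imageE)
    ultimately show False
      using inj_off that \<open>x \<noteq> y\<close> by metis
  qed
qed

lemma reroute_outside_cycle_permutes:
  assumes gS: "g ` S \<subseteq> S" "\<And>x. x \<notin> S \<Longrightarrow> g x = x" and "finite S" "i \<in> S" "j \<in> S"
    and collision: "\<And>x y. g x = g y \<Longrightarrow> x \<noteq> y \<Longrightarrow> g x = j"
    and inj_off: "\<And>x y. g x = g y \<Longrightarrow> x \<noteq> k \<Longrightarrow> y \<noteq> k \<Longrightarrow> x = y"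
    and i_not_image: "\<And>x. g x \<noteq> i"
    and C: "j \<in> C" "C \<subseteq> S" "g ` C = C"
  shows "(\<lambda>l. if l = j then i else if l \<in> C then l else g l) permutes S"
    (is "?\<tau> permutes S")
proof (rule inj_imp_permutes)
  have g_outside: "g l \<notin> C - {j}" if "l \<notin> C" for l
    by (rule outside_invariant_set(1)[of g j k C l]) (fact collision inj_off C(1,3) that)+
  have g_inj_outside: "x = y" if "x \<notin> C" "y \<notin> C" "g x = g y" for x y
    by (rule outside_invariant_set(2)[of g j k C x y]) (fact collision inj_off C(1,3) that)+
  have "i \<notin> C"
    using C(3) i_not_image by (metis imageE)
  then have \<tau>_neq_i: "?\<tau> l \<noteq> i" if "l \<noteq> j" for l
    using that i_not_image by auto
  show "inj_on ?\<tau> S"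
  proof (rule inj_onI)
    fix x y assume eq: "?\<tau> x = ?\<tau> y"
    show "x = y"
    proof (cases "x = j \<or> y = j")
      case True
      then show ?thesis
        using eq \<tau>_neq_i by metis
    next
      case False
      then have "(if x \<in> C then x else g x) = (if y \<in> C then y else g y)"
        using eq by simp
      then show ?thesis
        using False g_outside[of x] g_outside[of y] g_inj_outside[of x y] by (auto split: if_splits)
    qed
  qed
  show "?\<tau> x \<in> S" if "x \<in> S" for x
    using that gS(1) \<open>i \<in> S\<close> by auto
  show "?\<tau> x = x" if "x \<notin> S" for x
    using that gS(2) \<open>j \<in> S\<close> C(2) by auto
qed fact

(* sigma(k := j) hits j twice and misses i: on the cycle C of j it is a permutation rho, and off C,
   together with j |-> i, a permutation tau. *)
lemma redirected_perm_decomposition: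
  assumes \<sigma>: "\<sigma> permutes S" "\<sigma> k = i" and ij: "i \<noteq> j" and S: "finite S" "j \<in> S" "k \<in> S"
  obtains C \<rho> \<tau> where "\<rho> permutes S" "\<tau> permutes S" "\<tau> j = i" "j \<in> C" "C \<subseteq> S"
    "\<And>l. l \<in> C \<Longrightarrow> \<rho> l = (\<sigma>(k := j)) l \<and> (l \<noteq> j \<longrightarrow> \<tau> l = l)"
    "\<And>l. l \<notin> C \<Longrightarrow> \<rho> l = l \<and> \<tau> l = (\<sigma>(k := j)) l"
proof -
  define g where "g = \<sigma>(k := j)"
  note g = redirected_perm_facts[OF \<sigma> ij S(2,3), folded g_def]
  have "i \<in> S"
    using permutes_in_image[OF \<sigma>(1)] \<sigma>(2) S(3) by blast
  obtain C where C: "j \<in> C" "C \<subseteq> S" "g ` C = C"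
    using invariant_cycle_through[OF S(1) g(1) S(2)] g(3) by metis
  define \<rho> where "\<rho> l = (if l \<in> C then g l else l)" for l
  define \<tau> where "\<tau> l = (if l = j then i else if l \<in> C then l else g l)" for l
  have "finite C"
    using C(2) S(1) by (rule finite_subset)
  then have "bij_betw g C C"
    using C(3) by (simp add: bij_betw_def finite_surj_inj)
  then have "bij_betw \<rho> C C"
    by (rule bij_betw_cong[THEN iffD1, rotated]) (simp add: \<rho>_def)
  then have "\<rho> permutes C"
    by (rule bij_imp_permutes) (simp add: \<rho>_def)
  then have "\<rho> permutes S"
    using C(2) by (rule permutes_subset)
  moreover have "\<tau> permutes S"
    unfolding \<tau>_def[abs_def] using g(1,2) S(1) \<open>i \<in> S\<close> S(2) g(3-5) C
    by (rule reroute_outside_cycle_permutes)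
  ultimately show ?thesis
    by (rule that) (use C(1,2) in \<open>auto simp: \<rho>_def \<tau>_def g_def\<close>)
qed

lemma exchange_into_partial_track:
  fixes D :: "'g::linordered_ab_group_add smat"
  assumes diag: "\<And>l. l < n \<Longrightarrow> D l l = 1"
    and tracks: "\<And>\<rho>. \<rho> permutes {..<n} \<Longrightarrow> (\<Prod>l<n. D l (\<rho> l)) \<le>\<^sub>\<nu> 1"
    and \<sigma>: "\<sigma> permutes {..<n}" "\<sigma> k = i" and ij: "i \<noteq> j" and j: "j < n" and k: "k < n"
  obtains \<tau> where "\<tau> permutes {..<n}" "\<tau> j = i"
    "(\<Prod>l\<in>{..<n}-{k}. D l (\<sigma> l)) * D k j \<le>\<^sub>\<nu> (\<Prod>l\<in>{..<n}-{j}. D l (\<tau> l))"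
proof -
  define S where "S = {..<n}"
  define g where "g = \<sigma>(k := j)"
  have S: "finite S" "j \<in> S" "k \<in> S"
    using j k by (simp_all add: S_def)
  obtain C \<rho> \<tau> where \<rho>: "\<rho> permutes S" and \<tau>: "\<tau> permutes S" "\<tau> j = i" and "j \<in> C"
    and on_C: "\<And>l. l \<in> C \<Longrightarrow> \<rho> l = g l \<and> (l \<noteq> j \<longrightarrow> \<tau> l = l)"
    and off_C: "\<And>l. l \<notin> C \<Longrightarrow> \<rho> l = l \<and> \<tau> l = g l"
    using redirected_perm_decomposition[OF \<sigma>[folded S_def] ij S, folded g_def] by metis
  have "(\<Prod>l\<in>S-{k}. D l (\<sigma> l)) * D k j = (\<Prod>l\<in>S. D l (g l))"
  proof -
    have "(\<Prod>l\<in>S. D l (g l)) = D k (g k) * (\<Prod>l\<in>S-{k}. D l (g l))"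
      using S(1,3) by (rule prod.remove)
    moreover have "(\<Prod>l\<in>S-{k}. D l (g l)) = (\<Prod>l\<in>S-{k}. D l (\<sigma> l))"
      by (rule prod.cong) (auto simp: g_def)
    ultimately show ?thesis
      by (simp add: g_def mult.commute)
  qed
  also have "\<dots> = (\<Prod>l\<in>S. D l (\<rho> l) * (if l = j then 1 else D l (\<tau> l)))"
  proof (rule prod.cong)
    fix l assume "l \<in> S"
    then show "D l (g l) = D l (\<rho> l) * (if l = j then 1 else D l (\<tau> l))"
      using diag on_C[of l] off_C[of l] \<open>j \<in> C\<close> by (cases "l \<in> C") (auto simp: S_def)
  qed simp
  also have "\<dots> = (\<Prod>l\<in>S. D l (\<rho> l)) * (\<Prod>l\<in>S-{j}. D l (\<tau> l))"
    using S(1,2) by (simp add: prod.distrib prod.remove)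
  also have "\<dots> \<le>\<^sub>\<nu> 1 * (\<Prod>l\<in>S-{j}. D l (\<tau> l))"
    using tracks \<rho> by (intro mult_nu_le_mono) (auto simp: S_def)
  finally show ?thesis
    using that \<tau> by (simp add: S_def)
qed

section \<open>Tracks of \<nu>-transitive matrices\<close>

lemma transpose_moved_point:
  assumes \<rho>: "\<rho> permutes S" and "finite S" "a \<in> S" "\<rho> a \<noteq> a"
  shows "\<rho> \<circ> Transposition.transpose a (\<rho> a) permutes S"
    and "card {l\<in>S. (\<rho> \<circ> Transposition.transpose a (\<rho> a)) l \<noteq> l} < card {l\<in>S. \<rho> l \<noteq> l}"
proof -
  have "\<rho> a \<in> S"
    using permutes_in_image[OF \<rho>] \<open>a \<in> S\<close> by blast
  then show "\<rho> \<circ> Transposition.transpose a (\<rho> a) permutes S"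
    using \<rho> \<open>a \<in> S\<close> by (simp add: permutes_compose permutes_swap_id)
  have "\<rho> (\<rho> a) \<noteq> \<rho> a"
    using permutes_inj[OF \<rho>] \<open>\<rho> a \<noteq> a\<close> by (metis injD)
  with \<open>\<rho> a \<in> S\<close> have "{l\<in>S. (\<rho> \<circ> Transposition.transpose a (\<rho> a)) l \<noteq> l} \<subset> {l\<in>S. \<rho> l \<noteq> l}"
    using \<open>\<rho> a \<noteq> a\<close> by (auto simp: transpose_def)
  then show "card {l\<in>S. (\<rho> \<circ> Transposition.transpose a (\<rho> a)) l \<noteq> l} < card {l\<in>S. \<rho> l \<noteq> l}"
    by (rule psubset_card_mono[rotated]) (simp add: \<open>finite S\<close>)
qed

lemma partial_track_transpose_nu_le:
  assumes "finite S" "a \<in> S" "\<rho> a \<in> S" "\<rho> a \<noteq> a" and one: "1 \<le>\<^sub>\<nu> F (\<rho> a) (\<rho> a)"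
  shows "(\<Prod>l\<in>S-{a}. F l (\<rho> l))
    \<le>\<^sub>\<nu> (\<Prod>l\<in>S-{a}. F l ((\<rho> \<circ> Transposition.transpose a (\<rho> a)) l)) * F (\<rho> a) (\<rho> (\<rho> a))"
proof -
  define b where "b = \<rho> a"
  define R where "R = (\<Prod>l\<in>S-{a}-{b}. F l (\<rho> l))"
  have b: "b \<in> S - {a}"
    using assms by (simp add: b_def)
  have "(\<Prod>l\<in>S-{a}. F l (\<rho> l)) = F b (\<rho> b) * R"
    unfolding R_def using assms(1) b by (rule prod.remove[OF finite_Diff])
  also have "\<dots> \<le>\<^sub>\<nu> F b (\<rho> b) * (F b b * R)"
    using nu_le_mult_right[OF one, of R] by (intro mult_nu_le_mono nu_le_refl) (simp add: b_def mult.commute)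
  also have "R = (\<Prod>l\<in>S-{a}-{b}. F l ((\<rho> \<circ> Transposition.transpose a b) l))"
    unfolding R_def by (rule prod.cong) auto
  also have "F b b * \<dots> = (\<Prod>l\<in>S-{a}. F l ((\<rho> \<circ> Transposition.transpose a b) l))"
    using prod.remove[OF finite_Diff[OF assms(1)] b, of "\<lambda>l. F l ((\<rho> \<circ> Transposition.transpose a b) l)"]
    by (simp add: b_def)
  finally show ?thesis
    by (simp add: b_def ac_simps)
qed

(* Induction on the number of moved points: composing with a transposition trades
   F a b * F b (rho b) for F a (rho b) and a new fixed point b, whose diagonal factor is >=nu 1. *)
lemma transitive_tracks_nu_le_one:
  fixes F :: "'g::linordered_ab_group_add smat"
  assumes trans: "\<And>a b c. a < n \<Longrightarrow> b < n \<Longrightarrow> c < n \<Longrightarrow> F a b * F b c \<le>\<^sub>\<nu> F a c"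
    and diag_ge: "\<And>l. l < n \<Longrightarrow> 1 \<le>\<^sub>\<nu> F l l"
    and diag_le: "\<And>l. l < n \<Longrightarrow> F l l \<le>\<^sub>\<nu> 1"
  shows "\<rho> permutes {..<n} \<Longrightarrow> (\<Prod>l<n. F l (\<rho> l)) \<le>\<^sub>\<nu> 1"
proof (induction "card {l\<in>{..<n}. \<rho> l \<noteq> l}" arbitrary: \<rho> rule: less_induct)
  case less
  note \<rho> = \<open>\<rho> permutes {..<n}\<close>
  show ?case
  proof (cases "\<forall>l<n. \<rho> l = l")
    case True
    then have "(\<Prod>l<n. F l (\<rho> l)) = (\<Prod>l<n. F l l)"
      by simp
    also have "\<dots> \<le>\<^sub>\<nu> (\<Prod>l<n. 1)"
      by (rule prod_nu_le_mono) (simp add: diag_le)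
    finally show ?thesis
      by simp
  next
    case False
    then obtain a where a: "a < n" "\<rho> a \<noteq> a"
      by blast
    define b where "b = \<rho> a"
    define \<rho>' where "\<rho>' = \<rho> \<circ> Transposition.transpose a b"
    have b: "b < n" "\<rho> b < n"
      using permutes_in_image[OF \<rho>] a(1) by (simp_all add: b_def)
    have "\<rho>' permutes {..<n}" "card {l\<in>{..<n}. \<rho>' l \<noteq> l} < card {l\<in>{..<n}. \<rho> l \<noteq> l}"
      using transpose_moved_point[OF \<rho> _ _ a(2)] a(1) by (simp_all add: \<rho>'_def b_def)
    then have IH: "(\<Prod>l<n. F l (\<rho>' l)) \<le>\<^sub>\<nu> 1"
      using less.hyps by blast
    have "(\<Prod>l<n. F l (\<rho> l)) = F a b * (\<Prod>l\<in>{..<n}-{a}. F l (\<rho> l))"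
      unfolding b_def using a(1) by (simp add: prod.remove)
    also have "\<dots> \<le>\<^sub>\<nu> F a b * ((\<Prod>l\<in>{..<n}-{a}. F l (\<rho>' l)) * F b (\<rho> b))"
      unfolding \<rho>'_def b_def using a b diag_ge
      by (intro mult_nu_le_mono nu_le_refl partial_track_transpose_nu_le) (auto simp: b_def)
    also have "\<dots> = (F a b * F b (\<rho> b)) * (\<Prod>l\<in>{..<n}-{a}. F l (\<rho>' l))"
      by (simp add: ac_simps)
    also have "\<dots> \<le>\<^sub>\<nu> F a (\<rho> b) * (\<Prod>l\<in>{..<n}-{a}. F l (\<rho>' l))"
      by (intro mult_nu_le_mono nu_le_refl trans a(1) b)
    also have "\<dots> = (\<Prod>l<n. F l (\<rho>' l))"
      unfolding \<rho>'_def using a(1) by (simp add: prod.remove)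
    finally show ?thesis
      using IH by (rule nu_le_trans)
  qed
qed

lemma partial_track_absorbed:
  fixes M F :: "'g::linordered_ab_group_add smat"
  assumes absorb: "\<And>a b c. a < n \<Longrightarrow> b < n \<Longrightarrow> c < n \<Longrightarrow> M a b * F b c \<le>\<^sub>\<nu> M a c"
    and diag_ge: "\<And>l. l < n \<Longrightarrow> 1 \<le>\<^sub>\<nu> F l l"
    and tracks: "\<And>\<rho>. \<rho> permutes {..<n} \<Longrightarrow> (\<Prod>l<n. F l (\<rho> l)) \<le>\<^sub>\<nu> 1"
    and i: "i < n" and j: "j < n"
  shows "\<sigma> permutes {..<n} \<Longrightarrow> M i (\<sigma> j) * (\<Prod>l\<in>{..<n}-{j}. F l (\<sigma> l)) \<le>\<^sub>\<nu> M i j"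
proof (induction "card {l\<in>{..<n}. \<sigma> l \<noteq> l}" arbitrary: \<sigma> rule: less_induct)
  case less
  note \<sigma> = \<open>\<sigma> permutes {..<n}\<close>
  define k where "k = \<sigma> j"
  define P where "P = (\<Prod>l\<in>{..<n}-{j}. F l (\<sigma> l))"
  have k: "k < n" "\<sigma> k < n"
    using permutes_in_image[OF \<sigma>] j by (simp_all add: k_def)
  show ?case
  proof (cases "k = j")
    case True
    have "P \<le>\<^sub>\<nu> P * F j j"
      by (simp add: nu_le_mult_right diag_ge j)
    also have "\<dots> = (\<Prod>l<n. F l (\<sigma> l))"
      unfolding P_def using j True by (simp add: prod.remove k_def mult.commute)
    also have "\<dots> \<le>\<^sub>\<nu> 1"
      using \<sigma> by (rule tracks)
    finally have "M i j * P \<le>\<^sub>\<nu> M i j * 1"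
      by (intro mult_nu_le_mono nu_le_refl)
    then show ?thesis
      using True by (simp add: P_def k_def)
  next
    case False
    define \<sigma>' where "\<sigma>' = \<sigma> \<circ> Transposition.transpose j k"
    define P' where "P' = (\<Prod>l\<in>{..<n}-{j}. F l (\<sigma>' l))"
    have "\<sigma>' permutes {..<n}" "card {l\<in>{..<n}. \<sigma>' l \<noteq> l} < card {l\<in>{..<n}. \<sigma> l \<noteq> l}"
      using transpose_moved_point[OF \<sigma> _ _ False[unfolded k_def]] j by (simp_all add: \<sigma>'_def k_def)
    then have IH: "M i (\<sigma>' j) * P' \<le>\<^sub>\<nu> M i j"
      unfolding P'_def using less.hyps by blast
    have "M i k * P \<le>\<^sub>\<nu> M i k * (P' * F k (\<sigma> k))"
      unfolding P_def P'_def \<sigma>'_def k_def using j k False diag_ge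
      by (intro mult_nu_le_mono nu_le_refl partial_track_transpose_nu_le) (auto simp: k_def)
    also have "\<dots> = (M i k * F k (\<sigma> k)) * P'"
      by (simp add: ac_simps)
    also have "\<dots> \<le>\<^sub>\<nu> M i (\<sigma>' j) * P'"
      using absorb[OF i k] by (intro mult_nu_le_mono nu_le_refl) (simp add: \<sigma>'_def)
    finally show ?thesis
      using IH unfolding P_def k_def by (rule nu_le_trans)
  qed
qed

section \<open>Adjoints of definite matrices\<close>

lemma finite_permutes_with: "finite {\<sigma>. \<sigma> permutes {..<n::nat} \<and> P \<sigma>}"
  by (rule finite_subset[OF _ finite_permutations[of "{..<n}"]]) auto

lemma sdet_cong: "(\<And>a b. a < n \<Longrightarrow> b < n \<Longrightarrow> A a b = B a b) \<Longrightarrow> sdet n A = sdet n B"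
  unfolding sdet_def
  by (rule sum.cong[OF refl], rule prod.cong[OF refl]) (auto dest: permutes_in_image)

lemma nabla_cong: "mat_eq n A B \<Longrightarrow> nabla n A = nabla n B"
  unfolding nabla_def sadj_def mat_eq_def
  by (intro ext arg_cong2[where f = "(*)"] arg_cong[where f = st_inv] sdet_cong)
    (auto simp: minor_def)

lemma definite_diag: "definite n D \<Longrightarrow> l < n \<Longrightarrow> D l l = 1"
  by (simp add: definite_def)

lemma definite_track_nu_le_one:
  assumes "definite n D" "\<rho> permutes {..<n}"
  shows "(\<Prod>l<n. D l (\<rho> l)) \<le>\<^sub>\<nu> 1"
proof -
  have "(\<Prod>l<n. D l (\<rho> l)) \<le>\<^sub>\<nu> sdet n D"
    unfolding sdet_def using assms(2) by (intro member_nu_le_sum) (simp_all add: finite_permutations)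
  then show ?thesis
    using assms(1) by (simp add: definite_def)
qed

lemma track_nu_le_perm_adj:
  assumes "\<sigma> permutes {..<n}" "\<sigma> j = i"
  shows "(\<Prod>l\<in>{..<n}-{j}. M l (\<sigma> l)) \<le>\<^sub>\<nu> perm_adj n M i j"
  unfolding perm_adj_def using assms by (intro member_nu_le_sum finite_permutes_with) simp

lemma perm_adj_nu_le:
  assumes "\<And>\<sigma>. \<sigma> permutes {..<n} \<Longrightarrow> \<sigma> j = i \<Longrightarrow> (\<Prod>l\<in>{..<n}-{j}. M l (\<sigma> l)) \<le>\<^sub>\<nu> y"
  shows "perm_adj n M i j \<le>\<^sub>\<nu> y"
  unfolding perm_adj_def using assms by (intro sum_nu_le finite_permutes_with) simp

lemma one_nu_le_perm_adj_diag:
  assumes "definite n D" "l < n"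
  shows "1 \<le>\<^sub>\<nu> perm_adj n D l l"
proof -
  have "(\<Prod>x\<in>{..<n}-{l}. D x (id x)) = 1"
    using assms by (intro prod.neutral) (auto simp: definite_def)
  moreover have "(\<Prod>x\<in>{..<n}-{l}. D x (id x)) \<le>\<^sub>\<nu> perm_adj n D l l"
    by (rule track_nu_le_perm_adj[OF permutes_id]) simp
  ultimately show ?thesis
    by simp
qed

lemma perm_adj_diag_nu_le_one:
  assumes D: "definite n D" and l: "l < n"
  shows "perm_adj n D l l \<le>\<^sub>\<nu> 1"
proof (rule perm_adj_nu_le)
  fix \<sigma> assume \<sigma>: "\<sigma> permutes {..<n}" "\<sigma> l = l"
  have "(\<Prod>x\<in>{..<n}-{l}. D x (\<sigma> x)) = (\<Prod>x<n. D x (\<sigma> x))"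
    using l \<sigma>(2) definite_diag[OF D l] by (simp add: prod.remove)
  then show "(\<Prod>x\<in>{..<n}-{l}. D x (\<sigma> x)) \<le>\<^sub>\<nu> 1"
    using definite_track_nu_le_one[OF D \<sigma>(1)] by simp
qed

lemma perm_adj_mult_nu_le:
  assumes D: "definite n D" and i: "i < n" and j: "j < n" and k: "k < n"
  shows "perm_adj n D i k * D k j \<le>\<^sub>\<nu> perm_adj n D i j"
  unfolding perm_adj_def[of n D i k] sum_distrib_right
proof (rule sum_nu_le[OF finite_permutes_with])
  fix \<sigma> assume "\<sigma> \<in> {\<sigma>. \<sigma> permutes {..<n} \<and> \<sigma> k = i}"
  then have \<sigma>: "\<sigma> permutes {..<n}" "\<sigma> k = i"
    by auto
  show "(\<Prod>l\<in>{..<n}-{k}. D l (\<sigma> l)) * D k j \<le>\<^sub>\<nu> perm_adj n D i j"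
  proof (cases "i = j")
    case True
    have "(\<Prod>l\<in>{..<n}-{k}. D l (\<sigma> l)) * D k j = (\<Prod>l<n. D l (\<sigma> l))"
      using k \<sigma>(2) True by (simp add: prod.remove mult.commute)
    also have "\<dots> \<le>\<^sub>\<nu> 1"
      using D \<sigma>(1) by (rule definite_track_nu_le_one)
    also have "1 \<le>\<^sub>\<nu> perm_adj n D i j"
      using one_nu_le_perm_adj_diag[OF D i] True by simp
    finally show ?thesis .
  next
    case False
    obtain \<tau> where \<tau>: "\<tau> permutes {..<n}" "\<tau> j = i"
      and le: "(\<Prod>l\<in>{..<n}-{k}. D l (\<sigma> l)) * D k j \<le>\<^sub>\<nu> (\<Prod>l\<in>{..<n}-{j}. D l (\<tau> l))"
      using exchange_into_partial_track[of n D \<sigma> k i j] definite_diag[OF D] definite_track_nu_le_one[OF D] \<sigma> False j k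
      by blast
    show ?thesis
      using le track_nu_le_perm_adj[OF \<tau>] by (rule nu_le_trans)
  qed
qed

lemma perm_adj_transitive:
  assumes D: "definite n D" and a: "a < n" and b: "b < n" and c: "c < n"
  shows "perm_adj n D a b * perm_adj n D b c \<le>\<^sub>\<nu> perm_adj n D a c"
  unfolding perm_adj_def[of n D b c] sum_distrib_left
proof (rule sum_nu_le[OF finite_permutes_with])
  fix \<sigma> assume "\<sigma> \<in> {\<sigma>. \<sigma> permutes {..<n} \<and> \<sigma> c = b}"
  then have \<sigma>: "\<sigma> permutes {..<n}" "\<sigma> c = b"
    by auto
  have "perm_adj n D a (\<sigma> c) * (\<Prod>l\<in>{..<n}-{c}. D l (\<sigma> l)) \<le>\<^sub>\<nu> perm_adj n D a c"
    by (rule partial_track_absorbed[where M = "perm_adj n D" and F = D])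
      (use perm_adj_mult_nu_le[OF D] definite_diag[OF D] definite_track_nu_le_one[OF D] a c \<sigma>(1) in auto)
  then show "perm_adj n D a b * (\<Prod>l\<in>{..<n}-{c}. D l (\<sigma> l)) \<le>\<^sub>\<nu> perm_adj n D a c"
    using \<sigma>(2) by simp
qed

lemma perm_adj_tracks_nu_le_one:
  assumes "definite n D" "\<rho> permutes {..<n}"
  shows "(\<Prod>l<n. perm_adj n D l (\<rho> l)) \<le>\<^sub>\<nu> 1"
  by (rule transitive_tracks_nu_le_one[where F = "perm_adj n D"])
    (use perm_adj_transitive one_nu_le_perm_adj_diag perm_adj_diag_nu_le_one assms in auto)

lemma sdet_perm_adj_nu:
  assumes D: "definite n D"
  shows "nu (sdet n (perm_adj n D)) = nu 1"
proof (rule nu_le_antisym)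
  show "sdet n (perm_adj n D) \<le>\<^sub>\<nu> 1"
    unfolding sdet_def
    by (rule sum_nu_le) (use perm_adj_tracks_nu_le_one[OF D] finite_permutations in auto)
  have "1 \<le>\<^sub>\<nu> (\<Prod>l<n. perm_adj n D l (id l))"
    by (rule one_nu_le_prod) (simp add: one_nu_le_perm_adj_diag[OF D])
  also have "\<dots> \<le>\<^sub>\<nu> sdet n (perm_adj n D)"
    unfolding sdet_def
    by (rule member_nu_le_sum) (simp_all add: finite_permutations permutes_id[unfolded id_def])
  finally show "1 \<le>\<^sub>\<nu> sdet n (perm_adj n D)" .
qed

lemma perm_adj_partial_track_nu_le:
  assumes D: "definite n D" and \<sigma>: "\<sigma> permutes {..<n}" "\<sigma> j = i" and i: "i < n" and j: "j < n"
  shows "(\<Prod>l\<in>{..<n}-{j}. perm_adj n D l (\<sigma> l)) \<le>\<^sub>\<nu> perm_adj n D i j"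
proof -
  have "(\<Prod>l\<in>{..<n}-{j}. perm_adj n D l (\<sigma> l))
      \<le>\<^sub>\<nu> (\<Prod>l\<in>{..<n}-{j}. perm_adj n D l (\<sigma> l)) * perm_adj n D i i"
    by (rule nu_le_mult_right[OF one_nu_le_perm_adj_diag[OF D i]])
  also have "\<dots> = perm_adj n D i (\<sigma> j) * (\<Prod>l\<in>{..<n}-{j}. perm_adj n D l (\<sigma> l))"
    using \<sigma>(2) by (simp add: mult.commute)
  also have "\<dots> \<le>\<^sub>\<nu> perm_adj n D i j"
    by (rule partial_track_absorbed[where F = "perm_adj n D"])
      (use perm_adj_transitive one_nu_le_perm_adj_diag perm_adj_tracks_nu_le_one D i j \<sigma>(1) in auto)
  finally show ?thesis .
qed

lemma perm_adj_perm_adj_nu: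
  assumes D: "definite n D" and i: "i < n" and j: "j < n"
  shows "nu (perm_adj n (perm_adj n D) i j) = nu (perm_adj n D i j)"
proof (rule nu_le_antisym)
  show "perm_adj n (perm_adj n D) i j \<le>\<^sub>\<nu> perm_adj n D i j"
    by (rule perm_adj_nu_le) (use perm_adj_partial_track_nu_le[OF D _ _ i j] in auto)
  define \<tau> where "\<tau> = Transposition.transpose i j"
  have \<tau>: "\<tau> permutes {..<n}" "\<tau> j = i"
    using i j by (simp_all add: \<tau>_def permutes_swap_id)
  have "(\<Prod>l\<in>{..<n}-{j}. if l = i then perm_adj n D i j else 1)
      \<le>\<^sub>\<nu> (\<Prod>l\<in>{..<n}-{j}. perm_adj n D l (\<tau> l))"
    by (rule prod_nu_le_mono) (auto simp: \<tau>_def one_nu_le_perm_adj_diag[OF D])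
  then have "perm_adj n D i j \<le>\<^sub>\<nu> (\<Prod>l\<in>{..<n}-{j}. perm_adj n D l (\<tau> l))"
  proof (cases "i = j")
    case True
    have "perm_adj n D i j \<le>\<^sub>\<nu> 1"
      using perm_adj_diag_nu_le_one[OF D j] True by simp
    also have "1 \<le>\<^sub>\<nu> (\<Prod>l\<in>{..<n}-{j}. perm_adj n D l (\<tau> l))"
      by (rule one_nu_le_prod) (simp add: \<tau>_def True one_nu_le_perm_adj_diag[OF D])
    finally show ?thesis .
  qed (use i in simp)
  also have "\<dots> \<le>\<^sub>\<nu> perm_adj n (perm_adj n D) i j"
    using \<tau> by (rule track_nu_le_perm_adj)
  finally show "perm_adj n D i j \<le>\<^sub>\<nu> perm_adj n (perm_adj n D) i j" .
qed

lemma nabla_definite: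
  assumes "definite n D" "i < n" "j < n"
  shows "nabla n D i j = perm_adj n D i j"
  using assms by (simp add: nabla_def definite_def sadj_eq_perm_adj)

lemma nabla_nabla_definite_nu:
  assumes D: "definite n D" and i: "i < n" and j: "j < n"
  shows "nu (nabla n (nabla n D) i j) = nu (nabla n D i j)"
proof -
  have "nabla n (nabla n D) = nabla n (perm_adj n D)"
    using nabla_definite[OF D] by (intro nabla_cong) (simp add: mat_eq_def)
  then have "nu (nabla n (nabla n D) i j)
      = nu (st_inv (sdet n (perm_adj n D))) * nu (perm_adj n (perm_adj n D) i j)"
    by (simp add: nabla_def nu_mult sadj_eq_perm_adj[OF i j])
  also have "\<dots> = nu (st_inv 1) * nu (perm_adj n D i j)"
    using nu_st_inv_cong[OF sdet_perm_adj_nu[OF D]] perm_adj_perm_adj_nu[OF D i j] by simp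
  finally show ?thesis
    using nabla_definite[OF D i j] by (simp add: nu_mult[symmetric])
qed

lemma nabla_mult_definite_nu:
  assumes D: "definite n D" and i: "i < n" and j: "j < n"
  shows "nu (mat_mult n (nabla n D) D i j) = nu (nabla n D i j)"
proof -
  have "mat_mult n (nabla n D) D i j = (\<Sum>k<n. perm_adj n D i k * D k j)"
    unfolding mat_mult_def using nabla_definite[OF D i] by simp
  also have "nu \<dots> = nu (perm_adj n D i j)"
  proof (rule nu_le_antisym)
    show "(\<Sum>k<n. perm_adj n D i k * D k j) \<le>\<^sub>\<nu> perm_adj n D i j"
      by (rule sum_nu_le) (use perm_adj_mult_nu_le[OF D i j] in auto)
    have "perm_adj n D i j * D j j \<le>\<^sub>\<nu> (\<Sum>k<n. perm_adj n D i k * D k j)"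
      by (rule member_nu_le_sum) (use j in auto)
    then show "perm_adj n D i j \<le>\<^sub>\<nu> (\<Sum>k<n. perm_adj n D i k * D k j)"
      using definite_diag[OF D j] by simp
  qed
  finally show ?thesis
    using nabla_definite[OF D i j] by simp
qed

section \<open>Invertible matrices\<close>

lemma right_inverse_support:
  fixes P B :: "'g::linordered_ab_group_add smat"
  assumes PB: "mat_eq n (mat_mult n P B) mat_id"
  shows "\<And>i. i < n \<Longrightarrow> \<exists>k<n. P i k \<noteq> 0 \<and> B k i \<noteq> 0"
    and "\<And>i k l. i < n \<Longrightarrow> k < n \<Longrightarrow> l < n \<Longrightarrow> i \<noteq> l \<Longrightarrow> P i k = 0 \<or> B k l = 0"
proof -
  have entry: "(\<Sum>k<n. P i k * B k l) = (if i = l then 1 else 0)" if "i < n" "l < n" for i l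
    using PB that by (simp add: mat_eq_def mat_mult_def mat_id_def)
  show "\<exists>k<n. P i k \<noteq> 0 \<and> B k i \<noteq> 0" if "i < n" for i
  proof (rule ccontr)
    assume "\<not> ?thesis"
    then have "(\<Sum>k<n. P i k * B k i) = 0"
      by (auto simp: sum_st_eq_zero_iff mult_st_eq_zero_iff)
    then show False
      using entry[OF that that] by (simp add: one_st_def zero_st_def)
  qed
  show "P i k = 0 \<or> B k l = 0" if "i < n" "k < n" "l < n" "i \<noteq> l" for i k l
    using entry[OF that(1,3)] that by (simp add: sum_st_eq_zero_iff mult_st_eq_zero_iff)
qed

lemma inverse_pair_support:
  fixes P B :: "'g::linordered_ab_group_add smat"
  assumes PB: "mat_eq n (mat_mult n P B) mat_id" and BP: "mat_eq n (mat_mult n B P) mat_id"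
  shows "\<And>i. i < n \<Longrightarrow> \<exists>k<n. P i k \<noteq> 0 \<and> B k i \<noteq> 0"
    and "\<And>i k k'. i < n \<Longrightarrow> k < n \<Longrightarrow> k' < n \<Longrightarrow> P i k \<noteq> 0 \<Longrightarrow> P i k' \<noteq> 0 \<Longrightarrow> k = k'"
    and "\<And>i i' k. i < n \<Longrightarrow> i' < n \<Longrightarrow> k < n \<Longrightarrow> P i k \<noteq> 0 \<Longrightarrow> P i' k \<noteq> 0 \<Longrightarrow> i = i'"
proof -
  note PB_off = right_inverse_support(2)[OF PB] and BP_off = right_inverse_support(2)[OF BP]
  show "\<exists>k<n. P i k \<noteq> 0 \<and> B k i \<noteq> 0" if "i < n" for i
    using right_inverse_support(1)[OF PB that] .
  have inverse_nonzero: "B k i \<noteq> 0" if i: "i < n" and k: "k < n" and Pik: "P i k \<noteq> 0" for i k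
  proof -
    obtain l where "l < n" "B k l \<noteq> 0" "P l k \<noteq> 0"
      using right_inverse_support(1)[OF BP k] by blast
    moreover have "l = i"
      using PB_off[of i k l] i k Pik calculation by blast
    ultimately show ?thesis
      by simp
  qed
  show "k = k'" if "i < n" "k < n" "k' < n" "P i k \<noteq> 0" "P i k' \<noteq> 0" for i k k'
    using BP_off[of k i k'] inverse_nonzero[of i k] that by blast
  show "i = i'" if "i < n" "i' < n" "k < n" "P i k \<noteq> 0" "P i' k \<noteq> 0" for i i' k
    using PB_off[of i k i'] inverse_nonzero[of i' k] that by blast
qed

lemma inverse_pair_entry_tangible:
  fixes P B :: "'g::linordered_ab_group_add smat"
  assumes PB: "mat_eq n (mat_mult n P B) mat_id" and i: "i < n" and k: "k < n"
    and single: "\<And>k'. k' < n \<Longrightarrow> k' \<noteq> k \<Longrightarrow> P i k' = 0"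
  shows "tangible (P i k)"
proof -
  have "(\<Sum>k'<n. P i k' * B k' i) = P i k * B k i + (\<Sum>k'\<in>{..<n}-{k}. P i k' * B k' i)"
    using k by (intro sum.remove) simp_all
  also have "(\<Sum>k'\<in>{..<n}-{k}. P i k' * B k' i) = 0"
    using single by (intro sum.neutral) simp
  finally have "P i k * B k i = (\<Sum>k'<n. P i k' * B k' i)"
    by simp
  also have "\<dots> = 1"
    using PB i unfolding mat_eq_def mat_mult_def mat_id_def by simp
  finally show ?thesis
    by (metis one_st_def tangible.simps(1) tangible_mult_iff)
qed

definition gen_perm_matrix :: "nat \<Rightarrow> 'g::linordered_ab_group_add smat \<Rightarrow> (nat \<Rightarrow> nat) \<Rightarrow> (nat \<Rightarrow> 'g st) \<Rightarrow> bool" where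
  "gen_perm_matrix n P \<pi> p \<longleftrightarrow> \<pi> permutes {..<n} \<and> (\<forall>i<n. tangible (p i))
     \<and> (\<forall>i<n. \<forall>j<n. P i j = (if j = \<pi> i then p i else 0))"

lemma invertible_smat_gen_perm:
  assumes "invertible_smat n P"
  shows "\<exists>\<pi> p. gen_perm_matrix n P \<pi> p"
proof -
  obtain B where PB: "mat_eq n (mat_mult n P B) mat_id" and BP: "mat_eq n (mat_mult n B P) mat_id"
    using assms by (auto simp: invertible_smat_def)
  note row_exists = inverse_pair_support(1)[OF PB BP]
    and row_unique = inverse_pair_support(2)[OF PB BP]
    and col_unique = inverse_pair_support(3)[OF PB BP]
  define \<pi> where "\<pi> i = (if i < n then SOME k. k < n \<and> P i k \<noteq> 0 else i)" for i
  have \<pi>: "\<pi> i < n" "P i (\<pi> i) \<noteq> 0" if "i < n" for i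
    using someI_ex[of "\<lambda>k. k < n \<and> P i k \<noteq> 0"] row_exists[OF that] that by (auto simp: \<pi>_def)
  have off: "P i j = 0" if "i < n" "j < n" "j \<noteq> \<pi> i" for i j
    using row_unique[of i j "\<pi> i"] \<pi>[OF that(1)] that by blast
  have "\<pi> permutes {..<n}"
  proof (rule inj_imp_permutes)
    show "inj_on \<pi> {..<n}"
      using col_unique \<pi> by (metis inj_onI lessThan_iff)
  qed (use \<pi> in \<open>auto simp: \<pi>_def\<close>)
  moreover have "tangible (P i (\<pi> i))" if "i < n" for i
    using inverse_pair_entry_tangible[OF PB that \<pi>(1)[OF that]] off that by blast
  moreover have "P i j = (if j = \<pi> i then P i (\<pi> i) else 0)" if "i < n" "j < n" for i j
    using off[OF that] by simp
  ultimately have "gen_perm_matrix n P \<pi> (\<lambda>i. P i (\<pi> i))"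
    by (simp add: gen_perm_matrix_def)
  then show ?thesis
    by blast
qed

lemma gen_perm_mult_left:
  assumes "gen_perm_matrix n P \<pi> p" and i: "i < n"
  shows "mat_mult n P M i j = p i * M (\<pi> i) j"
proof -
  have "mat_mult n P M i j = (\<Sum>k<n. if k = \<pi> i then p i * M k j else 0)"
    unfolding mat_mult_def using assms by (intro sum.cong) (auto simp: gen_perm_matrix_def)
  also have "\<dots> = p i * M (\<pi> i) j"
    using assms permutes_in_image[of \<pi> "{..<n}"] by (simp add: sum.delta' gen_perm_matrix_def)
  finally show ?thesis .
qed

lemma gen_perm_mult_right:
  assumes "gen_perm_matrix n P \<pi> p" and j: "j < n"
  shows "mat_mult n M P i j = M i (inv \<pi> j) * p (inv \<pi> j)"
proof -
  have \<pi>: "\<pi> permutes {..<n}"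
    using assms(1) by (simp add: gen_perm_matrix_def)
  have "mat_mult n M P i j = (\<Sum>k<n. if k = inv \<pi> j then M i k * p k else 0)"
    unfolding mat_mult_def using assms
    by (intro sum.cong) (auto simp: gen_perm_matrix_def permutes_inverses[OF \<pi>]
        dest: permutes_inv_eq[OF \<pi>, THEN iffD2])
  also have "\<dots> = M i (inv \<pi> j) * p (inv \<pi> j)"
    using permutes_in_image[OF permutes_inv[OF \<pi>]] j by (simp add: sum.delta')
  finally show ?thesis .
qed

section \<open>Row operations and transposition\<close>

lemma prod_row_op:
  assumes \<pi>: "\<pi> permutes {..<n}" and \<sigma>: "\<sigma> permutes {..<n}" and T: "T \<subseteq> {..<n}"
    and A: "\<And>i j. i < n \<Longrightarrow> j < n \<Longrightarrow> A i j = p i * D (\<pi> i) j"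
  shows "(\<Prod>l\<in>T. A l (\<sigma> l)) = (\<Prod>l\<in>T. p l) * (\<Prod>m\<in>\<pi> ` T. D m ((\<sigma> \<circ> inv \<pi>) m))"
proof -
  have "(\<Prod>l\<in>T. A l (\<sigma> l)) = (\<Prod>l\<in>T. p l * D (\<pi> l) (\<sigma> l))"
    using T permutes_in_image[OF \<sigma>] by (intro prod.cong) (auto simp: A)
  also have "\<dots> = (\<Prod>l\<in>T. p l) * (\<Prod>l\<in>T. D (\<pi> l) (\<sigma> l))"
    by (rule prod.distrib)
  also have "(\<Prod>l\<in>T. D (\<pi> l) (\<sigma> l)) = (\<Prod>m\<in>\<pi> ` T. D m ((\<sigma> \<circ> inv \<pi>) m))"
    using permutes_inj_on[OF \<pi>] \<pi> by (simp add: prod.reindex inj_on_subset[OF _ subset_UNIV] permutes_inverses)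
  finally show ?thesis .
qed

lemma sdet_row_op:
  assumes \<pi>: "\<pi> permutes {..<n}" and A: "\<And>i j. i < n \<Longrightarrow> j < n \<Longrightarrow> A i j = p i * D (\<pi> i) j"
  shows "sdet n A = (\<Prod>l<n. p l) * sdet n D"
proof -
  have "sdet n A = (\<Sum>\<sigma> | \<sigma> permutes {..<n}. (\<Prod>l<n. p l) * (\<Prod>m<n. D m ((\<sigma> \<circ> inv \<pi>) m)))"
    unfolding sdet_def using prod_row_op[where p = p and D = D, OF \<pi> _ subset_refl A] permutes_image[OF \<pi>]
    by (intro sum.cong) auto
  also have "\<dots> = (\<Prod>l<n. p l) * (\<Sum>\<sigma> | \<sigma> permutes {..<n}. \<Prod>m<n. D m ((\<sigma> \<circ> inv \<pi>) m))"
    by (simp add: sum_distrib_left)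
  also have "(\<Sum>\<sigma> | \<sigma> permutes {..<n}. \<Prod>m<n. D m ((\<sigma> \<circ> inv \<pi>) m)) = sdet n D"
    unfolding sdet_def by (rule sum_permutations_compose_right[OF permutes_inv[OF \<pi>], symmetric])
  finally show ?thesis .
qed

lemma perm_adj_row_op:
  assumes \<pi>: "\<pi> permutes {..<n}" and A: "\<And>i j. i < n \<Longrightarrow> j < n \<Longrightarrow> A i j = p i * D (\<pi> i) j"
    and j: "j < n"
  shows "perm_adj n A i j = (\<Prod>l\<in>{..<n}-{j}. p l) * perm_adj n D i (\<pi> j)"
proof -
  have image: "\<pi> ` ({..<n}-{j}) = {..<n}-{\<pi> j}"
    using permutes_image[OF \<pi>] permutes_inj[OF \<pi>] by (auto simp: inj_eq)
  have "perm_adj n A i j = (\<Sum>\<sigma> | \<sigma> permutes {..<n} \<and> \<sigma> j = i.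
      (\<Prod>l\<in>{..<n}-{j}. p l) * (\<Prod>m\<in>{..<n}-{\<pi> j}. D m ((\<sigma> \<circ> inv \<pi>) m)))"
    unfolding perm_adj_def using prod_row_op[where p = p and D = D and T = "{..<n}-{j}", OF \<pi> _ _ A] image
    by (intro sum.cong) auto
  also have "\<dots> = (\<Prod>l\<in>{..<n}-{j}. p l) *
      (\<Sum>\<sigma> | \<sigma> permutes {..<n} \<and> \<sigma> j = i. \<Prod>m\<in>{..<n}-{\<pi> j}. D m ((\<sigma> \<circ> inv \<pi>) m))"
    by (simp add: sum_distrib_left)
  also have "(\<Sum>\<sigma> | \<sigma> permutes {..<n} \<and> \<sigma> j = i. \<Prod>m\<in>{..<n}-{\<pi> j}. D m ((\<sigma> \<circ> inv \<pi>) m))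
      = perm_adj n D i (\<pi> j)"
    unfolding perm_adj_def
  proof (rule sum.reindex_bij_witness[where j = "\<lambda>\<sigma>. \<sigma> \<circ> inv \<pi>" and i = "\<lambda>\<tau>. \<tau> \<circ> \<pi>"])
    fix \<sigma> assume "\<sigma> \<in> {\<sigma>. \<sigma> permutes {..<n} \<and> \<sigma> j = i}"
    then show "\<sigma> \<circ> inv \<pi> \<circ> \<pi> = \<sigma>" "\<sigma> \<circ> inv \<pi> \<in> {\<tau>. \<tau> permutes {..<n} \<and> \<tau> (\<pi> j) = i}"
      using \<pi> by (auto simp: fun_eq_iff permutes_compose permutes_inv permutes_inverses)
  next
    fix \<tau> assume "\<tau> \<in> {\<tau>. \<tau> permutes {..<n} \<and> \<tau> (\<pi> j) = i}"
    then show "\<tau> \<circ> \<pi> \<circ> inv \<pi> = \<tau>" "\<tau> \<circ> \<pi> \<in> {\<sigma>. \<sigma> permutes {..<n} \<and> \<sigma> j = i}"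
      using \<pi> by (auto simp: fun_eq_iff permutes_compose permutes_inverses)
  qed simp
  finally show ?thesis .
qed

lemma nabla_row_op:
  assumes \<pi>: "\<pi> permutes {..<n}" and A: "\<And>i j. i < n \<Longrightarrow> j < n \<Longrightarrow> A i j = p i * D (\<pi> i) j"
    and p: "\<And>i. i < n \<Longrightarrow> tangible (p i)" and i: "i < n" and j: "j < n"
  shows "nabla n A i j = st_inv (p j) * nabla n D i (\<pi> j)"
proof -
  define q where "q = (\<Prod>l\<in>{..<n}-{j}. p l)"
  have "tangible q"
    unfolding q_def using p by (intro tangible_prod) auto
  have "(\<Prod>l<n. p l) = p j * q"
    unfolding q_def using j by (simp add: prod.remove)
  then have "nabla n A i j = st_inv (p j * q * sdet n D) * (q * perm_adj n D i (\<pi> j))"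
    using perm_adj_row_op[where p = p and D = D, OF \<pi> A j] sdet_row_op[where p = p and D = D, OF \<pi> A]
    by (simp add: nabla_def sadj_eq_perm_adj[OF i j] q_def)
  also have "\<dots> = st_inv (p j) * (st_inv q * q) * (st_inv (sdet n D) * perm_adj n D i (\<pi> j))"
    by (simp add: st_inv_mult ac_simps)
  also have "\<dots> = st_inv (p j) * nabla n D i (\<pi> j)"
    using st_inv_mult_tangible[OF \<open>tangible q\<close>] permutes_in_image[OF \<pi>] i j
    by (simp add: nabla_def sadj_eq_perm_adj)
  finally show ?thesis .
qed

definition mat_transpose :: "'g smat \<Rightarrow> 'g smat" where
  "mat_transpose M = (\<lambda>i j. M j i)"

lemma mat_transpose_apply [simp]: "mat_transpose M i j = M j i"
  by (simp add: mat_transpose_def)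

lemma sdet_transpose: "sdet n (mat_transpose M) = sdet n M"
proof -
  have "sdet n (mat_transpose M) = (\<Sum>\<sigma> | \<sigma> permutes {..<n}. \<Prod>m<n. M m (inv \<sigma> m))"
    unfolding sdet_def
  proof (rule sum.cong[OF refl])
    fix \<sigma> assume "\<sigma> \<in> {\<sigma>. \<sigma> permutes {..<n}}"
    then have \<sigma>: "\<sigma> permutes {..<n}"
      by simp
    show "(\<Prod>i<n. mat_transpose M i (\<sigma> i)) = (\<Prod>m<n. M m (inv \<sigma> m))"
      using prod.permute[OF \<sigma>, of "\<lambda>m. M m (inv \<sigma> m)"] \<sigma> by (simp add: permutes_inverses)
  qed
  also have "\<dots> = sdet n M"
    unfolding sdet_def by (rule sum_permutations_inverse[symmetric])
  finally show ?thesis .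
qed

lemma perm_adj_transpose:
  assumes i: "i < n" and j: "j < n"
  shows "perm_adj n (mat_transpose M) i j = perm_adj n M j i"
proof -
  have "perm_adj n (mat_transpose M) i j
      = (\<Sum>\<sigma> | \<sigma> permutes {..<n} \<and> \<sigma> j = i. \<Prod>m\<in>{..<n}-{i}. M m (inv \<sigma> m))"
    unfolding perm_adj_def
  proof (rule sum.cong[OF refl])
    fix \<sigma> assume "\<sigma> \<in> {\<sigma>. \<sigma> permutes {..<n} \<and> \<sigma> j = i}"
    then have \<sigma>: "\<sigma> permutes {..<n}" "\<sigma> j = i"
      by auto
    have image: "\<sigma> ` ({..<n}-{j}) = {..<n}-{i}"
      using permutes_image[OF \<sigma>(1)] permutes_inj[OF \<sigma>(1)] \<sigma>(2) by (auto simp: inj_eq)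
    show "(\<Prod>l\<in>{..<n}-{j}. mat_transpose M l (\<sigma> l)) = (\<Prod>m\<in>{..<n}-{i}. M m (inv \<sigma> m))"
      unfolding image[symmetric] using permutes_inj_on[OF \<sigma>(1)] \<sigma>(1)
      by (simp add: prod.reindex inj_on_subset[OF _ subset_UNIV] permutes_inverses)
  qed
  also have "\<dots> = perm_adj n M j i"
    unfolding perm_adj_def
  proof (rule sum.reindex_bij_witness[where j = inv and i = inv])
    fix \<sigma> assume "\<sigma> \<in> {\<sigma>. \<sigma> permutes {..<n} \<and> \<sigma> j = i}"
    then show "inv (inv \<sigma>) = \<sigma>" "inv \<sigma> \<in> {\<tau>. \<tau> permutes {..<n} \<and> \<tau> i = j}"
      by (auto simp: permutes_inv_inv permutes_inv permutes_inv_eq)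
  next
    fix \<tau> assume "\<tau> \<in> {\<tau>. \<tau> permutes {..<n} \<and> \<tau> i = j}"
    then show "inv (inv \<tau>) = \<tau>" "inv \<tau> \<in> {\<sigma>. \<sigma> permutes {..<n} \<and> \<sigma> j = i}"
      by (auto simp: permutes_inv_inv permutes_inv permutes_inv_eq)
  qed simp
  finally show ?thesis .
qed

lemma nabla_transpose:
  assumes "i < n" "j < n"
  shows "nabla n (mat_transpose M) i j = nabla n M j i"
  using assms by (simp add: nabla_def sdet_transpose sadj_eq_perm_adj perm_adj_transpose)

lemma mat_mult_transpose: "mat_mult n (mat_transpose A) (mat_transpose B) = mat_transpose (mat_mult n B A)"
  by (simp add: mat_mult_def mat_transpose_def fun_eq_iff mult.commute)

lemma mat_eq_transpose: "mat_eq n A B \<Longrightarrow> mat_eq n (mat_transpose A) (mat_transpose B)"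
  by (simp add: mat_eq_def)

lemma definite_transpose: "definite n D \<Longrightarrow> definite n (mat_transpose D)"
  by (simp add: definite_def sdet_transpose)

lemma mat_transpose_mat_id [simp]: "mat_transpose mat_id = mat_id"
  by (auto simp: mat_id_def fun_eq_iff)

lemma invertible_transpose:
  assumes "invertible_smat n P"
  shows "invertible_smat n (mat_transpose P)"
proof -
  obtain B where "mat_eq n (mat_mult n P B) mat_id" "mat_eq n (mat_mult n B P) mat_id"
    using assms by (auto simp: invertible_smat_def)
  then have "mat_eq n (mat_mult n (mat_transpose P) (mat_transpose B)) mat_id"
    and "mat_eq n (mat_mult n (mat_transpose B) (mat_transpose P)) mat_id"
    using mat_eq_transpose by (fastforce simp: mat_mult_transpose)+
  then show ?thesis
    by (auto simp: invertible_smat_def)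
qed

lemma nabla_col_op:
  assumes \<pi>: "\<pi> permutes {..<n}" and A: "\<And>i j. i < n \<Longrightarrow> j < n \<Longrightarrow> A i j = D i (\<pi> j) * q j"
    and q: "\<And>i. i < n \<Longrightarrow> tangible (q i)" and i: "i < n" and j: "j < n"
  shows "nabla n A i j = st_inv (q i) * nabla n D (\<pi> i) j"
proof -
  have "nabla n (mat_transpose A) j i = st_inv (q i) * nabla n (mat_transpose D) j (\<pi> i)"
    by (rule nabla_row_op[where A = "mat_transpose A" and D = "mat_transpose D", OF \<pi> _ q j i])
      (simp add: A mult.commute)
  then show ?thesis
    using permutes_in_image[OF \<pi>] i j by (simp add: nabla_transpose)
qed

section \<open>Definite forms\<close>

lemma nabla_gen_perm_mult:
  assumes P: "gen_perm_matrix n P \<pi> p" and A: "mat_eq n A (mat_mult n P D)" and i: "i < n" and j: "j < n"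
  shows "nabla n A i j = nabla n D i (\<pi> j) * st_inv (p j)"
proof -
  have "A i j = p i * D (\<pi> i) j" if "i < n" "j < n" for i j
    using A gen_perm_mult_left[OF P] that by (simp add: mat_eq_def)
  then show ?thesis
    using nabla_row_op[where p = p and D = D, OF _ _ _ i j] P by (simp add: gen_perm_matrix_def mult.commute)
qed

lemma nabla_mult_left_form_nu:
  assumes "invertible_smat n P" and D: "definite n D" and A: "mat_eq n A (mat_mult n P D)"
  shows "nu_equiv n (nabla n D) (mat_mult n (nabla n A) A)"
proof -
  obtain \<pi> p where P: "gen_perm_matrix n P \<pi> p"
    using invertible_smat_gen_perm[OF assms(1)] by blast
  then have \<pi>: "\<pi> permutes {..<n}" and p: "\<And>i. i < n \<Longrightarrow> tangible (p i)"
    by (simp_all add: gen_perm_matrix_def)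
  have "mat_mult n (nabla n A) A i j = mat_mult n (nabla n D) D i j" if i: "i < n" and j: "j < n" for i j
  proof -
    have "mat_mult n (nabla n A) A i j = (\<Sum>k<n. nabla n D i (\<pi> k) * D (\<pi> k) j)"
      unfolding mat_mult_def
    proof (rule sum.cong[OF refl])
      fix k assume k: "k \<in> {..<n}"
      have "A k j = p k * D (\<pi> k) j"
        using A gen_perm_mult_left[OF P] k j by (simp add: mat_eq_def)
      then have "nabla n A i k * A k j = nabla n D i (\<pi> k) * (st_inv (p k) * p k) * D (\<pi> k) j"
        using nabla_gen_perm_mult[OF P A i] k by (simp add: mult.assoc)
      also have "\<dots> = nabla n D i (\<pi> k) * D (\<pi> k) j"
        using p k by (simp add: st_inv_mult_tangible)
      finally show "nabla n A i k * A k j = nabla n D i (\<pi> k) * D (\<pi> k) j" .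
    qed
    also have "\<dots> = mat_mult n (nabla n D) D i j"
      unfolding mat_mult_def using sum.permute[OF \<pi>, of "\<lambda>m. nabla n D i m * D m j"] by (simp add: o_def)
    finally show ?thesis .
  qed
  then show ?thesis
    using nabla_mult_definite_nu[OF D] by (simp add: nu_equiv_def)
qed

lemma nabla_nabla_left_form_nu:
  assumes "invertible_smat n P" and D: "definite n D" and A: "mat_eq n A (mat_mult n P D)"
  shows "nu_equiv n (nabla n (nabla n A)) (mat_mult n (mat_mult n P (nabla n A)) P)"
  unfolding nu_equiv_def
proof (intro allI impI)
  fix i j assume i: "i < n" and j: "j < n"
  obtain \<pi> p where P: "gen_perm_matrix n P \<pi> p"
    using invertible_smat_gen_perm[OF assms(1)] by blast
  then have \<pi>: "\<pi> permutes {..<n}" and p: "\<And>i. i < n \<Longrightarrow> tangible (p i)"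
    by (simp_all add: gen_perm_matrix_def)
  define k where "k = inv \<pi> j"
  have k: "k < n" "\<pi> k = j"
    using permutes_in_image[OF permutes_inv[OF \<pi>]] permutes_inverses(1)[OF \<pi>] j by (auto simp: k_def)
  have \<pi>i: "\<pi> i < n"
    using permutes_in_image[OF \<pi>] i by simp
  have "nabla n (nabla n A) i j = p i * nabla n (nabla n D) (\<pi> i) j"
    using nabla_col_op[where D = "nabla n D" and q = "\<lambda>j. st_inv (p j)", OF \<pi> nabla_gen_perm_mult[OF P A]]
      p i j by simp
  moreover have "mat_mult n (mat_mult n P (nabla n A)) P i j = p i * nabla n D (\<pi> i) j"
  proof -
    have "mat_mult n (mat_mult n P (nabla n A)) P i j = p i * (nabla n A (\<pi> i) k * p k)"
      using gen_perm_mult_right[OF P j] gen_perm_mult_left[OF P i] by (simp add: k_def mult.assoc)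
    also have "nabla n A (\<pi> i) k * p k = nabla n D (\<pi> i) j"
      using nabla_gen_perm_mult[OF P A \<pi>i k(1)] st_inv_mult_tangible[OF p[OF k(1)]] k(2)
      by (simp add: mult.assoc)
    finally show ?thesis .
  qed
  ultimately show "nu (nabla n (nabla n A) i j) = nu (mat_mult n (mat_mult n P (nabla n A)) P i j)"
    using nabla_nabla_definite_nu[OF D \<pi>i j] by (simp add: nu_mult)
qed

lemma nabla_mult_right_form_nu:
  assumes Q: "invertible_smat n Q" and D: "definite n D" and A: "mat_eq n A (mat_mult n D Q)"
  shows "nu_equiv n (nabla n D) (mat_mult n A (nabla n A))"
proof -
  have "mat_eq n (mat_transpose A) (mat_mult n (mat_transpose Q) (mat_transpose D))"
    unfolding mat_mult_transpose using A by (rule mat_eq_transpose)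
  then have "nu_equiv n (nabla n (mat_transpose D))
      (mat_mult n (nabla n (mat_transpose A)) (mat_transpose A))"
    by (rule nabla_mult_left_form_nu[OF invertible_transpose[OF Q] definite_transpose[OF D]])
  moreover have "mat_mult n (nabla n (mat_transpose A)) (mat_transpose A) j i = mat_mult n A (nabla n A) i j"
    if "j < n" for i j
    unfolding mat_mult_def using that by (intro sum.cong) (simp_all add: nabla_transpose mult.commute)
  ultimately show ?thesis
    by (simp add: nu_equiv_def nabla_transpose)
qed

lemma nabla_nabla_definite_nu_equiv:
  "definite n D \<Longrightarrow> nu_equiv n (nabla n (nabla n D)) (nabla n D)"
  by (simp add: nu_equiv_def nabla_nabla_definite_nu)

theorem corollary3p4:
  fixes n :: nat and A P Q Abar Atil :: "'g::linordered_ab_group_add smat"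
  assumes "nonsingular n A"
    and "invertible_smat n P" and "definite n Abar" and "mat_eq n A (mat_mult n P Abar)"
    and "invertible_smat n Q" and "definite n Atil" and "mat_eq n A (mat_mult n Atil Q)"
  shows "nu_equiv n (nabla n (nabla n Abar)) (nabla n Abar)
       \<and> nu_equiv n (nabla n Abar) (mat_mult n (nabla n A) A)
       \<and> nu_equiv n (nabla n (nabla n Atil)) (nabla n Atil)
       \<and> nu_equiv n (nabla n Atil) (mat_mult n A (nabla n A))
       \<and> nu_equiv n (nabla n (nabla n A)) (mat_mult n (mat_mult n P (nabla n A)) P)"
  using nabla_nabla_definite_nu_equiv[OF assms(3)] nabla_mult_left_form_nu[OF assms(2-4)]
    nabla_nabla_definite_nu_equiv[OF assms(6)] nabla_mult_right_form_nu[OF assms(5-7)]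
    nabla_nabla_left_form_nu[OF assms(2-4)]
  by blast

end
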